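(* Let $rr(n)$ be the number of partitions of $n$ into parts congruent to $\pm1\pmod5$, i.e. $\sum_{n\ge0}rr(n)q^n=\prod_{i\ge0}\frac{1}{(1-q^{5i+1})(1-q^{5i+4})}$. Let $a_i$ be the coefficients of $\sum_{j\in\mathbb Z}(-1)^jq^{j(5j-1)/2}=\sum_{i\ge0}a_iq^i$; explicitly $a_i=1$ if $i=10j^2\pm j$ for some integer $j\ge0$, $a_i=-1$ if $i=10j^2\pm9j+2$ for some integer $j\ge0$, and $a_i=0$ otherwise. Then for every $n\ge0$, $$rr(n)=\sum_{i=0}^n a_i\sum_{\substack{c\in\mathcal C_{P_5}\\ |c|=n-i}}(-1)^{\widehat\ell(c)},$$ where $P_5=\{m(3m\pm1)/2: m\in\mathbb N\}$.
   Context: A composition is an ordered finite sequence of positive integers (including the empty one); $|c|$ is the sum of parts; $\mathcal C_T$ is the set of compositions with all parts in $T$. $\widehat P:=\{m(3m\pm1)/2: m\in\mathbb N,\ m\text{ even}\}$, and $\widehat\ell(c)$ is the number of parts of $c$ lying in $\widehat P$. *)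

theory Defs
  imports Main "HOL-Library.Multiset"
begin

definition rr :: "nat \<Rightarrow> nat" where
  "rr n = card {M :: nat multiset. (\<forall>x\<in>#M. 0 < x \<and> (x mod 5 = 1 \<or> x mod 5 = 4)) \<and> sum_mset M = n}"

definition acoef :: "nat \<Rightarrow> int" where
  "acoef i = (if \<exists>j::int. j \<ge> 0 \<and> (int i = 10*j^2 + j \<or> int i = 10*j^2 - j) then 1
              else if \<exists>j::int. j \<ge> 0 \<and> (int i = 10*j^2 + 9*j + 2 \<or> int i = 10*j^2 - 9*j + 2) then -1
              else 0)"

definition compositions :: "nat set \<Rightarrow> nat list set" where
  "compositions T = {c. \<forall>x\<in>set c. 0 < x \<and> x \<in> T}"

definition P5 :: "nat set" where
  "P5 = {x. \<exists>m::int. m \<ge> 0 \<and> (int x = m*(3*m+1) div 2 \<or> int x = m*(3*m-1) div 2)}"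

definition P5hat :: "nat set" where
  "P5hat = {x. \<exists>m::int. m \<ge> 0 \<and> even m \<and> (int x = m*(3*m+1) div 2 \<or> int x = m*(3*m-1) div 2)}"

definition ellhat :: "nat list \<Rightarrow> nat" where
  "ellhat c = length (filter (\<lambda>x. x \<in> P5hat) c)"

end

theory Submission
  imports Defs "HOL-Computational_Algebra.Formal_Power_Series"
begin

unbundle fps_syntax

text \<open>
  Let eps(p) = -1 for p in P5hat and eps(p) = 1 otherwise.  Euler's pentagonal number theorem
  says prod_{n>=1} (1 - q^n) = 1 - S(q), where S(q) is the sum of eps(p) q^p over the positive p
  in P5, so 1/(1 - S) is the generating function of the signed compositions; the Jacobi triple
  product for the modulus 5 says sum_i a_i q^i = prod (1 - q^n) over n = 0, 2, 3 (mod 5).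
  Dividing the latter by the former leaves sum_n rr(n) q^n = 1 / prod_{n = 1, 4 (mod 5)} (1 - q^n).

  Infinite products are avoided by comparing power series only up to some degree M, where
  factors 1 - q^n with n > M may be dropped.  The triple product comes from its finite form,
  Cauchy's q-binomial theorem for prod_{i<2N} (q^(kN) - q^(a+ki)); multiplying by (q^k; q^k)_N
  turns each Gaussian binomial coefficient into 1 up to a degree large enough for the truncation.
\<close>

lemma less_mult_left_pos: "0 < (k::nat) \<Longrightarrow> m < i \<Longrightarrow> m < k * i"
  using mult_le_mono1[of "Suc 0" k i] by linarith

lemma add_mult_le_mult: "c < k \<Longrightarrow> i < N \<Longrightarrow> c + k * i \<le> k * (N::nat)"
  using mult_le_mono2[of "Suc i" N k] by simp

definition fps_eq_upto :: "nat \<Rightarrow> 'a::zero fps \<Rightarrow> 'a fps \<Rightarrow> bool" where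
  "fps_eq_upto M f g \<longleftrightarrow> (\<forall>i\<le>M. f $ i = g $ i)"

lemma fps_eq_upto_refl [simp]: "fps_eq_upto M f f"
  by (simp add: fps_eq_upto_def)

lemma fps_eq_upto_sym: "fps_eq_upto M f g \<Longrightarrow> fps_eq_upto M g f"
  by (simp add: fps_eq_upto_def)

lemma fps_eq_upto_trans: "fps_eq_upto M f g \<Longrightarrow> fps_eq_upto M g h \<Longrightarrow> fps_eq_upto M f h"
  by (simp add: fps_eq_upto_def)

lemmas [trans] = fps_eq_upto_trans

lemma fps_eq_upto_mult:
  fixes f g :: "'a::comm_semiring_1 fps"
  assumes "fps_eq_upto M f f'" "fps_eq_upto M g g'"
  shows "fps_eq_upto M (f * g) (f' * g')"
  unfolding fps_eq_upto_def fps_mult_nth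
  using assms by (auto simp: fps_eq_upto_def intro!: sum.cong)

lemma fps_eq_upto_sum:
  "(\<And>x. x \<in> A \<Longrightarrow> fps_eq_upto M (f x) (g x)) \<Longrightarrow> fps_eq_upto M (sum f A) (sum g A)"
  by (simp add: fps_eq_upto_def fps_sum_nth)

lemma fps_eq_upto_prod:
  fixes f g :: "'b \<Rightarrow> 'a::comm_semiring_1 fps"
  shows "(\<And>x. x \<in> A \<Longrightarrow> fps_eq_upto M (f x) (g x)) \<Longrightarrow> fps_eq_upto M (prod f A) (prod g A)"
proof (induction A rule: infinite_finite_induct)
  case (insert x F) then show ?case by (simp add: fps_eq_upto_mult)
qed auto

lemma fps_eq_upto_X_power_mult:
  "fps_eq_upto M' f g \<Longrightarrow> M \<le> d + M' \<Longrightarrow> fps_eq_upto M (fps_X^d * f) (fps_X^d * g)"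
  by (auto simp: fps_eq_upto_def fps_X_power_mult_nth)

lemma fps_eq_upto_prod_superset:
  fixes g :: "'b \<Rightarrow> nat"
  assumes "finite J" "I \<subseteq> J" "\<And>i. i \<in> J - I \<Longrightarrow> M < g i"
  shows "fps_eq_upto M (\<Prod>i\<in>I. 1 - fps_X^(g i) :: 'a::comm_ring_1 fps) (\<Prod>i\<in>J. 1 - fps_X^(g i))"
proof -
  have "fps_eq_upto M (\<Prod>i\<in>J - I. 1 - fps_X^(g i) :: 'a fps) (\<Prod>i\<in>J - I. 1)"
    by (rule fps_eq_upto_prod) (use assms(3) in \<open>fastforce simp: fps_eq_upto_def\<close>)
  then have "fps_eq_upto M ((\<Prod>i\<in>J - I. 1 - fps_X^(g i)) * (\<Prod>i\<in>I. 1 - fps_X^(g i)))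
               (1 * (\<Prod>i\<in>I. 1 - fps_X^(g i) :: 'a fps))"
    by (intro fps_eq_upto_mult) simp_all
  then show ?thesis
    by (simp add: prod.subset_diff[OF assms(2,1)] fps_eq_upto_sym)
qed

fun qbinom :: "'a::comm_ring_1 \<Rightarrow> nat \<Rightarrow> nat \<Rightarrow> 'a" where
  "qbinom Q 0 j = (if j = 0 then 1 else 0)"
| "qbinom Q (Suc m) 0 = 1"
| "qbinom Q (Suc m) (Suc j) = qbinom Q m j + Q^(Suc j) * qbinom Q m (Suc j)"

lemma qbinom_eq_0: "m < j \<Longrightarrow> qbinom Q m j = 0"
  by (induction Q m j rule: qbinom.induct) auto

lemma qbinom_0_right [simp]: "qbinom Q m 0 = 1"
  by (cases m) auto

lemma Suc_choose_two: "Suc j choose 2 = (j choose 2) + j"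
  by (simp add: numeral_2_eq_2)

lemma sum_lessThan_id_eq_choose_two: "(\<Sum>i<N. i) = N choose 2"
  by (induction N) (simp_all add: Suc_choose_two)

lemma qbinomial_theorem:
  fixes Q y z :: "'a::comm_ring_1"
  shows "(\<Prod>i<m. y + z * Q^i) = (\<Sum>j\<le>m. Q^(j choose 2) * qbinom Q m j * z^j * y^(m-j))"
proof (induction m arbitrary: z)
  case 0 then show ?case by (simp add: numeral_2_eq_2)
next
  case (Suc m)
  define A where "A j = Q^(j choose 2) * qbinom Q m j * (z*Q)^j * y^(m-j)" for j
  have step: "Q^(Suc j choose 2) * qbinom Q (Suc m) (Suc j) * z^Suc j * y^(Suc m - Suc j)
                = y * A (Suc j) + z * A j" if "j \<le> m" for j
  proof (cases "j = m")
    case True then show ?thesis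
      by (simp add: A_def qbinom_eq_0 Suc_choose_two power_add power_mult_distrib algebra_simps)
  next
    case False
    then have "y^(m - j) = y * y^(m - Suc j)" using that by (simp add: Suc_diff_Suc flip: power_Suc)
    then show ?thesis
      by (simp add: A_def Suc_choose_two power_add power_mult_distrib algebra_simps)
  qed
  have "(\<Prod>i<Suc m. y + z * Q^i) = (y + z) * (\<Sum>j\<le>m. A j)"
    using Suc.IH[of "z * Q"] by (subst prod.lessThan_Suc_shift) (simp add: A_def mult.assoc)
  also have "\<dots> = y * A 0 + (\<Sum>j\<le>m. y * A (Suc j) + z * A j)"
  proof -
    have "A (Suc m) = 0" by (simp add: A_def qbinom_eq_0)
    then have "y * (\<Sum>j\<le>m. A j) = y * A 0 + (\<Sum>j\<le>m. y * A (Suc j))"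
      using sum.atMost_Suc_shift[of A m] by (simp add: distrib_left sum_distrib_left)
    then show ?thesis
      by (simp add: distrib_right sum_distrib_left sum.distrib)
  qed
  also have "\<dots> = (\<Sum>j\<le>Suc m. Q^(j choose 2) * qbinom Q (Suc m) j * z^j * y^(Suc m - j))"
  proof -
    have "(\<Sum>j\<le>m. y * A (Suc j) + z * A j)
        = (\<Sum>j\<le>m. Q^(Suc j choose 2) * qbinom Q (Suc m) (Suc j) * z^Suc j * y^(Suc m - Suc j))"
      using step by (intro sum.cong) simp_all
    then show ?thesis by (subst sum.atMost_Suc_shift) (simp add: A_def)
  qed
  finally show ?case .
qed

definition q_pochhammer :: "'a::comm_ring_1 \<Rightarrow> nat \<Rightarrow> 'a" where
  "q_pochhammer Q n = (\<Prod>i\<in>{1..n}. 1 - Q^i)"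

lemma q_pochhammer_Suc: "q_pochhammer Q (Suc n) = q_pochhammer Q n * (1 - Q^Suc n)"
  by (simp add: q_pochhammer_def)

lemma qbinom_mult_q_pochhammer:
  fixes Q :: "'a::comm_ring_1"
  shows "j \<le> m \<Longrightarrow> qbinom Q m j * q_pochhammer Q (m - j) = (\<Prod>i\<in>{Suc j..m}. 1 - Q^i)"
proof (induction m arbitrary: j)
  case 0 then show ?case by (simp add: q_pochhammer_def)
next
  case (Suc m)
  show ?case
  proof (cases j)
    case 0 then show ?thesis by (simp add: q_pochhammer_def)
  next
    case (Suc i)
    show ?thesis
    proof (cases "i = m")
      case True then show ?thesis
        using Suc.IH[of m] by (simp add: \<open>j = Suc i\<close> qbinom_eq_0)
    next
      case False
      with Suc.prems \<open>j = Suc i\<close> have "i < m" by simp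
      then have qp: "q_pochhammer Q (m - i) = q_pochhammer Q (m - Suc i) * (1 - Q^(m - i))"
        by (metis Suc_diff_Suc q_pochhammer_Suc)
      define P where "P = (\<Prod>l\<in>{Suc (Suc i)..m}. 1 - Q^l)"
      have IH1: "qbinom Q m i * q_pochhammer Q (m - i) = (1 - Q^Suc i) * P"
        using Suc.IH[of i] \<open>i < m\<close> by (simp add: P_def prod.atLeast_Suc_atMost)
      have IH2: "qbinom Q m (Suc i) * q_pochhammer Q (m - Suc i) = P"
        using Suc.IH[of "Suc i"] \<open>i < m\<close> by (simp add: P_def)
      have "qbinom Q (Suc m) j * q_pochhammer Q (Suc m - j)
          = qbinom Q m i * q_pochhammer Q (m - i)
            + Q^Suc i * (1 - Q^(m - i)) * (qbinom Q m (Suc i) * q_pochhammer Q (m - Suc i))"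
        unfolding \<open>j = Suc i\<close> qbinom.simps diff_Suc_Suc qp by (simp only: algebra_simps)
      also have "\<dots> = P * (1 - Q^Suc i * Q^(m - i))"
        unfolding IH1 IH2 by (simp add: algebra_simps)
      also have "Q^Suc i * Q^(m - i) = Q^Suc m"
        using \<open>i < m\<close> by (subst power_add [symmetric]) simp
      finally show ?thesis
        using \<open>i < m\<close> by (simp add: P_def \<open>j = Suc i\<close>)
    qed
  qed
qed

lemma finite_jacobi_triple_product:
  fixes u v Q :: "'a::comm_ring_1"
  assumes uv: "u * v = Q"
  shows "(-u)^N * Q^((N choose 2) + N * N) * (\<Prod>i<N. 1 - u * Q^i) * (\<Prod>i<N. 1 - v * Q^i)
       = (\<Sum>j\<le>2*N. (-u)^j * Q^((j choose 2) + N * (2*N - j)) * qbinom Q (2*N) j)"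
proof -
  define f where "f i = Q^N + (-u) * Q^i" for i
  have low: "f i = (-u * Q^i) * (1 - v * Q^(N - Suc i))" if "i < N" for i
  proof -
    have "u * Q^i * (v * Q^(N - Suc i)) = Q^(Suc i + (N - Suc i))"
      by (simp add: uv[symmetric] power_add algebra_simps)
    also have "\<dots> = Q^N" using that by simp
    finally show ?thesis by (simp add: f_def algebra_simps)
  qed
  have high: "f (i + N) = Q^N * (1 - u * Q^i)" for i
    by (simp add: f_def power_add algebra_simps)
  have "(\<Prod>i<2*N. f i) = (\<Prod>i<N. f i) * (\<Prod>i<N. f (i + N))"
    using prod.atLeastLessThan_concat[of 0 N "N + N" f] prod.shift_bounds_nat_ivl[of f 0 N N]
    by (simp add: atLeast0LessThan mult_2)
  also have "(\<Prod>i<N. f i) = (\<Prod>i<N. -u * Q^i) * (\<Prod>i<N. 1 - v * Q^(N - Suc i))"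
    unfolding prod.distrib [symmetric] by (rule prod.cong) (simp_all add: low)
  also have "(\<Prod>i<N. 1 - v * Q^(N - Suc i)) = (\<Prod>i<N. 1 - v * Q^i)"
    by (rule prod.nat_diff_reindex)
  also have "(\<Prod>i<N. -u * Q^i) = (-u)^N * Q^(N choose 2)"
    by (simp add: prod.distrib flip: mult_minus_left power_sum sum_lessThan_id_eq_choose_two)
  also have "(\<Prod>i<N. f (i + N)) = Q^(N * N) * (\<Prod>i<N. 1 - u * Q^i)"
    by (simp add: high prod.distrib power_mult)
  also have "(\<Prod>i<2*N. f i)
      = (\<Sum>j\<le>2*N. Q^(j choose 2) * qbinom Q (2*N) j * (-u)^j * (Q^N)^(2*N - j))"
    unfolding f_def by (rule qbinomial_theorem)
  finally show ?thesis
    by (simp add: power_add power_mult mult_ac)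
qed

lemma fps_eq_upto_q_pochhammer_X_power:
  assumes "0 < k" "m \<le> n"
  shows "fps_eq_upto m (q_pochhammer (fps_X^k :: 'a::comm_ring_1 fps) m) (q_pochhammer (fps_X^k) n)"
  unfolding q_pochhammer_def power_mult [symmetric]
  using assms by (intro fps_eq_upto_prod_superset) (auto intro: less_mult_left_pos)

lemma fps_eq_upto_q_pochhammer_mult_qbinom:
  assumes "0 < k" "j \<le> 2 * N"
  shows "fps_eq_upto (min j (2*N - j))
           (q_pochhammer (fps_X^k :: 'a::comm_ring_1 fps) N * qbinom (fps_X^k) (2*N) j) 1"
proof -
  let ?m = "min j (2*N - j)" and ?Q = "fps_X^k :: 'a fps"
  have "fps_eq_upto ?m (q_pochhammer ?Q ?m) (q_pochhammer ?Q N)"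
    "fps_eq_upto ?m (q_pochhammer ?Q ?m) (q_pochhammer ?Q (2*N - j))"
    by (intro fps_eq_upto_q_pochhammer_X_power assms(1); linarith)+
  then have "fps_eq_upto ?m (q_pochhammer ?Q N) (q_pochhammer ?Q (2*N - j))"
    by (blast intro: fps_eq_upto_trans fps_eq_upto_sym)
  then have "fps_eq_upto ?m (q_pochhammer ?Q N * qbinom ?Q (2*N) j)
               (qbinom ?Q (2*N) j * q_pochhammer ?Q (2*N - j))"
    by (subst mult.commute, intro fps_eq_upto_mult) simp_all
  also have "qbinom ?Q (2*N) j * q_pochhammer ?Q (2*N - j) = (\<Prod>i\<in>{Suc j..2*N}. 1 - fps_X^(k*i))"
    by (simp add: qbinom_mult_q_pochhammer assms(2) power_mult)
  also have "fps_eq_upto ?m \<dots> (\<Prod>i\<in>{}. 1 - fps_X^(k*i))"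
    by (rule fps_eq_upto_sym, rule fps_eq_upto_prod_superset) (auto intro: less_mult_left_pos assms(1))
  finally show ?thesis by simp
qed

lemma neg_one_power_mult_nth [simp]: "((-1 :: 'a::comm_ring_1 fps)^n * f) $ i = (-1)^n * f $ i"
proof -
  have "(-1 :: 'a fps)^n = fps_const ((-1)^n)"
    by (simp only: fps_const_1_eq_1 [symmetric] fps_const_neg fps_const_power)
  then show ?thesis by simp
qed

text \<open>
  For a + b = k the triple product reads
  prod_{n>=0} (1 - q^(k(n+1))) (1 - q^(a+kn)) (1 - q^(b+kn)) = sum_{t in Z} (-1)^t q^(jacobi_exponent k a t),
  and jacobi_coeff k a n is the coefficient of q^n on the right (the exponents are distinct if a \<noteq> b).
\<close>

definition jacobi_exponent :: "nat \<Rightarrow> nat \<Rightarrow> int \<Rightarrow> int" where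
  "jacobi_exponent k a t = int k * (t * (t - 1) div 2) + int a * t"

lemma two_times_jacobi_exponent: "2 * jacobi_exponent k a t = int k * (t * (t - 1)) + 2 * int a * t"
  by (simp add: jacobi_exponent_def algebra_simps)

definition jacobi_coeff :: "nat \<Rightarrow> nat \<Rightarrow> nat \<Rightarrow> int" where
  "jacobi_coeff k a n =
     (if \<exists>t. even t \<and> jacobi_exponent k a t = int n then 1
      else if \<exists>t. odd t \<and> jacobi_exponent k a t = int n then -1 else 0)"

context
  fixes k a b :: nat
  assumes ab: "a + b = k" and a_pos: "0 < a" and b_pos: "0 < b"
begin

lemma abs_le_jacobi_exponent: "\<bar>t\<bar> \<le> jacobi_exponent k a t"
proof (cases "t \<ge> 0")
  case True
  have "0 \<le> t * (t - 1)" using True by (auto simp: zero_le_mult_iff)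
  then have "0 \<le> int k * (t * (t - 1))" by simp
  moreover have "t \<le> int a * t" using True a_pos by (simp add: mult_le_cancel_right1)
  ultimately show ?thesis using True two_times_jacobi_exponent[of k a t] by linarith
next
  case False
  then have "int k * 2 \<le> int k * (1 - t)" by (intro mult_left_mono) auto
  then have "2 * int a + 2 \<le> int k * (1 - t)" using ab b_pos by linarith
  then have "(2 * int a + 2) * (- t) \<le> int k * (1 - t) * (- t)"
    using False by (intro mult_right_mono) auto
  then show ?thesis using False two_times_jacobi_exponent[of k a t] by (simp add: algebra_simps)
qed

lemma qbinomial_exponent_eq:
  assumes "j \<le> 2 * N"
  shows "a * j + k * ((j choose 2) + N * (2*N - j))
       = a * N + k * ((N choose 2) + N * N) + nat (jacobi_exponent k a (int j - int N))"
proof -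
  have two_choose: "2 * int (n choose 2) = int n * (int n - 1)" for n
    by (induction n) (simp_all add: Suc_choose_two algebra_simps)
  have "2 * int (a * j + k * ((j choose 2) + N * (2*N - j)))
      = 2 * int a * int j + int k * (2 * int (j choose 2)) + 2 * int k * int N * int (2*N - j)"
    by (simp only: of_nat_add of_nat_mult) (simp add: algebra_simps)
  also have "\<dots> = 2 * int a * int N + int k * (2 * int (N choose 2)) + 2 * int k * int N * int N
      + 2 * jacobi_exponent k a (int j - int N)"
    unfolding two_choose two_times_jacobi_exponent using assms
    by (simp add: of_nat_diff algebra_simps)
  also have "\<dots> = 2 * int (a * N + k * ((N choose 2) + N * N)) + 2 * jacobi_exponent k a (int j - int N)"
    by (simp add: algebra_simps)
  finally have "2 * int (a * j + k * ((j choose 2) + N * (2*N - j)))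
      = 2 * int (a * N + k * ((N choose 2) + N * N)) + 2 * jacobi_exponent k a (int j - int N)" .
  moreover have "0 \<le> jacobi_exponent k a (int j - int N)"
    using abs_le_jacobi_exponent by (meson abs_ge_zero order_trans)
  ultimately have "int (a * j + k * ((j choose 2) + N * (2*N - j)))
      = int (a * N + k * ((N choose 2) + N * N) + nat (jacobi_exponent k a (int j - int N)))"
    by simp
  then show ?thesis by (simp only: of_nat_eq_iff)
qed

context
  assumes a_ne_b: "a \<noteq> b"
begin

lemma jacobi_exponent_inj:
  assumes "jacobi_exponent k a t = jacobi_exponent k a t'"
  shows "t = t'"
proof (rule ccontr)
  assume "t \<noteq> t'"
  have "(t - t') * (int k * (t + t' - 1) + 2 * int a)
      = 2 * jacobi_exponent k a t - 2 * jacobi_exponent k a t'"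
    unfolding two_times_jacobi_exponent by (simp add: algebra_simps)
  then have "(t - t') * (int k * (t + t' - 1) + 2 * int a) = 0"
    using assms by simp
  with \<open>t \<noteq> t'\<close> have eq: "int k * (t + t' - 1) = - 2 * int a" by simp
  consider "t + t' - 1 \<ge> 0" | "t + t' - 1 = -1" | "t + t' - 1 \<le> -2" by linarith
  then show False
  proof cases
    case 1
    then have "0 \<le> int k * (t + t' - 1)" by simp
    then show ?thesis using eq a_pos by linarith
  next
    case 2 then show ?thesis using eq ab a_ne_b by simp
  next
    case 3
    then have "int k * (t + t' - 1) \<le> int k * (-2)" by (intro mult_left_mono) auto
    then show ?thesis using eq ab b_pos by simp
  qed
qed


lemma jacobi_coeff_eq:
  assumes "jacobi_exponent k a t = int n"
  shows "jacobi_coeff k a n = (if even t then 1 else -1)"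
  using assms jacobi_exponent_inj
  unfolding jacobi_coeff_def by (smt (verit))

lemma partial_theta_sum_nth:
  assumes "i \<le> N"
  shows "(\<Sum>j\<le>2*N. (-1)^(N+j) * fps_X^nat (jacobi_exponent k a (int j - int N))) $ i
       = jacobi_coeff k a i"
proof -
  have D_nonneg: "0 \<le> jacobi_exponent k a t" for t
    using abs_le_jacobi_exponent[of t] by linarith
  have "(\<Sum>j\<le>2*N. (-1)^(N+j) * fps_X^nat (jacobi_exponent k a (int j - int N))) $ i
      = (\<Sum>j\<le>2*N. if jacobi_exponent k a (int j - int N) = int i then (-1)^(N+j) else 0 :: int)"
    unfolding fps_sum_nth using D_nonneg by (intro sum.cong) (auto simp: fps_X_power_nth)
  also have "\<dots> = jacobi_coeff k a i"
  proof (cases "\<exists>t. jacobi_exponent k a t = int i")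
    case True
    then obtain t where t: "jacobi_exponent k a t = int i" by blast
    have "\<bar>t\<bar> \<le> int N"
      using abs_le_jacobi_exponent[of t] t assms by linarith
    then obtain j0 where j0: "j0 \<le> 2*N" "int j0 - int N = t"
      by (intro that[of "nat (t + int N)"]) auto
    have "jacobi_exponent k a (int j - int N) = int i \<longleftrightarrow> j = j0" for j
      using jacobi_exponent_inj[of "int j - int N" t] j0 t by auto
    then have "(\<Sum>j\<le>2*N. if jacobi_exponent k a (int j - int N) = int i then (-1)^(N+j) else 0)
        = ((-1)^(N+j0) :: int)"
      using j0(1) by simp
    also have "\<dots> = (if even t then 1 else -1)"
    proof -
      have "int (N + j0) = t + 2 * int N" using j0(2) by simp
      then have "even (N + j0) \<longleftrightarrow> even t" by (metis even_add even_of_nat_iff dvd_triv_left)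
      then show ?thesis by simp
    qed
    finally show ?thesis using jacobi_coeff_eq[OF t] by simp
  next
    case False
    then show ?thesis by (simp add: jacobi_coeff_def)
  qed
  finally show ?thesis .
qed

lemma finite_jacobi_triple_product_fps:
  "(\<Prod>i<N. 1 - fps_X^a * (fps_X^k)^i) * (\<Prod>i<N. 1 - fps_X^b * (fps_X^k)^i)
     = (\<Sum>j\<le>2*N. (-1)^(N+j) * fps_X^nat (jacobi_exponent k a (int j - int N))
                     * qbinom (fps_X^k) (2*N) j :: int fps)"
  (is "?L = (\<Sum>j\<le>2*N. ?s j * fps_X^?d j * ?q j)")
proof -
  define c where "c = a * N + k * ((N choose 2) + N * N)"
  have "fps_X^c * ((-1)^N * ?L)
      = (- (fps_X^a))^N * (fps_X^k)^((N choose 2) + N * N) * (\<Prod>i<N. 1 - fps_X^a * (fps_X^k)^i)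
          * (\<Prod>i<N. 1 - fps_X^b * (fps_X^k)^i)"
    unfolding c_def power_minus[of "fps_X^a"] power_add power_mult by (simp only: mult_ac)
  also have "\<dots> = (\<Sum>j\<le>2*N. (- (fps_X^a))^j * (fps_X^k)^((j choose 2) + N * (2*N - j)) * ?q j)"
    by (rule finite_jacobi_triple_product) (simp add: ab flip: power_add)
  also have "\<dots> = fps_X^c * (\<Sum>j\<le>2*N. (-1)^j * fps_X^?d j * ?q j)"
    unfolding sum_distrib_left
  proof (rule sum.cong)
    fix j assume "j \<in> {..2*N}"
    then have "a * j + k * ((j choose 2) + N * (2*N - j)) = c + ?d j"
      unfolding c_def using qbinomial_exponent_eq by simp
    then show "(- (fps_X^a))^j * (fps_X^k)^((j choose 2) + N * (2*N - j)) * ?q j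
        = fps_X^c * ((-1)^j * fps_X^?d j * ?q j)"
      by (simp add: power_minus[of "fps_X^a"] mult_ac flip: power_mult power_add)
  qed simp
  finally have "(-1)^N * ?L = (\<Sum>j\<le>2*N. (-1)^j * fps_X^?d j * ?q j)"
    by simp
  then have "(-1)^N * ((-1)^N * ?L) = (-1)^N * (\<Sum>j\<le>2*N. (-1)^j * fps_X^?d j * ?q j)"
    by (rule arg_cong)
  moreover have "(-1 :: int fps)^N * ((-1)^N * ?L) = ?L"
    by (simp flip: mult.assoc power_mult_distrib)
  ultimately show ?thesis
    unfolding sum_distrib_left by (simp add: power_add mult.assoc)
qed

lemma prod_jacobi_triple_eq_upto:
  "fps_eq_upto N
     (q_pochhammer (fps_X^k) N * (\<Prod>i<N. 1 - fps_X^a * (fps_X^k)^i) * (\<Prod>i<N. 1 - fps_X^b * (fps_X^k)^i))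
     (Abs_fps (jacobi_coeff k a))"
proof -
  define d where "d j = nat (jacobi_exponent k a (int j - int N))" for j
  define q :: "nat \<Rightarrow> int fps" where "q j = qbinom (fps_X^k) (2*N) j" for j
  have "q_pochhammer (fps_X^k) N * (\<Prod>i<N. 1 - fps_X^a * (fps_X^k)^i) * (\<Prod>i<N. 1 - fps_X^b * (fps_X^k)^i)
      = (\<Sum>j\<le>2*N. (-1)^(N+j) * (fps_X^d j * (q_pochhammer (fps_X^k) N * q j)))"
    unfolding mult.assoc finite_jacobi_triple_product_fps sum_distrib_left d_def q_def
    by (intro sum.cong) (simp_all add: mult.left_commute)
  \<comment> \<open>the shift \<open>d j \<ge> |j - N|\<close> makes up for the precision \<open>min j (2N - j)\<close> of each term\<close>
  also have "fps_eq_upto N \<dots> (\<Sum>j\<le>2*N. (-1)^(N+j) * (fps_X^d j * 1))"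
  proof (rule fps_eq_upto_sum, rule fps_eq_upto_mult [OF fps_eq_upto_refl])
    fix j assume "j \<in> {..2*N}"
    moreover have "\<bar>int j - int N\<bar> \<le> jacobi_exponent k a (int j - int N)"
      by (rule abs_le_jacobi_exponent)
    ultimately have "N \<le> d j + min j (2*N - j)" unfolding d_def by auto
    with \<open>j \<in> {..2*N}\<close>
    show "fps_eq_upto N (fps_X^d j * (q_pochhammer (fps_X^k) N * q j)) (fps_X^d j * 1)"
      unfolding q_def using a_pos ab
      by (intro fps_eq_upto_X_power_mult[OF fps_eq_upto_q_pochhammer_mult_qbinom]) simp_all
  qed
  also have "fps_eq_upto N \<dots> (Abs_fps (jacobi_coeff k a))"
    using partial_theta_sum_nth by (simp add: fps_eq_upto_def d_def)
  finally show ?thesis .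
qed

lemma residue_classes_eq_image_Un:
  "{e \<in> {1..k*N}. e mod k \<in> {0, a, b}}
     = (\<lambda>i. k*i) ` {1..N} \<union> (\<lambda>i. a + k*i) ` {..<N} \<union> (\<lambda>i. b + k*i) ` {..<N}"
    (is "?S = ?T")
proof (intro equalityI subsetI)
  fix e assume e: "e \<in> ?S"
  define q where "q = e div k"
  have e_eq: "e = e mod k + k * q" unfolding q_def by simp
  have e_le: "e \<le> k * N" using e by simp
  with e_eq have "k * q \<le> k * N" by linarith
  then have q_le: "q \<le> N" using ab a_pos by simp
  consider "e mod k = 0" | "e mod k = a" | "e mod k = b" using e by auto
  then show "e \<in> ?T"
  proof cases
    case 1
    then have "e = k * q" using e_eq by simp
    moreover have "1 \<le> q" using e \<open>e = k * q\<close> by (cases q) auto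
    ultimately show ?thesis using q_le by (intro UnI1 image_eqI[where x=q]) simp_all
  next
    case 2
    then have "k * q < k * N" using e_le e_eq a_pos by linarith
    then have "q < N" by simp
    then show ?thesis using e_eq 2 by (intro UnI1 UnI2 image_eqI[where x=q]) simp_all
  next
    case 3
    then have "k * q < k * N" using e_le e_eq b_pos by linarith
    then have "q < N" by simp
    then show ?thesis using e_eq 3 by (intro UnI2 image_eqI[where x=q]) simp_all
  qed
next
  have a_b_less: "a < k" "b < k" using ab a_pos b_pos by auto
  fix e assume "e \<in> ?T"
  then show "e \<in> ?S"
  proof (elim UnE imageE)
    fix i assume "i \<in> {1..N}" "e = k * i"
    then show ?thesis using a_b_less by simp
  next
    fix i assume "i \<in> {..<N}" "e = a + k * i"
    then show ?thesis using a_b_less add_mult_le_mult a_pos by simp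
  next
    fix i assume "i \<in> {..<N}" "e = b + k * i"
    then show ?thesis using a_b_less add_mult_le_mult b_pos by simp
  qed
qed

lemma prod_residue_classes:
  "(\<Prod>e\<in>{e \<in> {1..k*N}. e mod k \<in> {0, a, b}}. 1 - fps_X^e :: 'c::comm_ring_1 fps)
     = q_pochhammer (fps_X^k) N * (\<Prod>i<N. 1 - fps_X^a * (fps_X^k)^i) * (\<Prod>i<N. 1 - fps_X^b * (fps_X^k)^i)"
proof -
  have a_b_less: "a < k" "b < k" using ab a_pos b_pos by auto
  have inj: "inj_on (\<lambda>i. k*i) {1..N}" "inj_on (\<lambda>i. a + k*i) {..<N}" "inj_on (\<lambda>i. b + k*i) {..<N}"
    using a_b_less by (auto intro!: inj_onI)
  let ?A = "(\<lambda>i. k*i) ` {1..N}"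
    and ?B = "(\<lambda>i. a + k*i) ` {..<N}" and ?C = "(\<lambda>i. b + k*i) ` {..<N}"
  have res_A: "e mod k = 0" if "e \<in> ?A" for e
    using that by auto
  have res_B: "e mod k = a" if "e \<in> ?B" for e
    using that a_b_less by auto
  have res_C: "e mod k = b" if "e \<in> ?C" for e
    using that a_b_less by auto
  have disj1: "?A \<inter> ?B = {}"
  proof (rule equals0I)
    fix e assume "e \<in> ?A \<inter> ?B"
    then show False using res_A res_B a_pos by (metis IntE less_irrefl)
  qed
  have disj2: "(?A \<union> ?B) \<inter> ?C = {}"
  proof (rule equals0I)
    fix e assume "e \<in> (?A \<union> ?B) \<inter> ?C"
    then show False using res_A res_B res_C b_pos a_ne_b by (metis IntE UnE less_irrefl)
  qed
  have "(\<Prod>e\<in>?A \<union> ?B \<union> ?C. 1 - fps_X^e :: 'c fps)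
      = (\<Prod>e\<in>?A \<union> ?B. 1 - fps_X^e) * (\<Prod>e\<in>?C. 1 - fps_X^e)"
    by (rule prod.union_disjoint[OF _ _ disj2]) simp_all
  also have "\<dots> = (\<Prod>e\<in>?A. 1 - fps_X^e) * (\<Prod>e\<in>?B. 1 - fps_X^e) * (\<Prod>e\<in>?C. 1 - fps_X^e)"
    by (subst prod.union_disjoint[OF _ _ disj1]) simp_all
  also have "\<dots> = (\<Prod>i\<in>{1..N}. 1 - fps_X^(k*i)) * (\<Prod>i<N. 1 - fps_X^(a + k*i))
      * (\<Prod>i<N. 1 - fps_X^(b + k*i))"
    unfolding prod.reindex[OF inj(1)] prod.reindex[OF inj(2)] prod.reindex[OF inj(3)] o_def ..
  finally show ?thesis
    unfolding residue_classes_eq_image_Un q_pochhammer_def by (simp add: power_add power_mult)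
qed

lemma jacobi_triple_product_eq_upto:
  "fps_eq_upto M (\<Prod>e\<in>{e \<in> {1..M}. e mod k \<in> {0, a, b}}. 1 - fps_X^e) (Abs_fps (jacobi_coeff k a))"
proof -
  have M_le: "M \<le> k * M" using ab a_pos by simp
  have "fps_eq_upto M (\<Prod>e\<in>{e \<in> {1..M}. e mod k \<in> {0, a, b}}. 1 - fps_X^e :: int fps)
      (\<Prod>e\<in>{e \<in> {1..k*M}. e mod k \<in> {0, a, b}}. 1 - fps_X^e)"
    by (rule fps_eq_upto_prod_superset[where g = "\<lambda>e. e"]) (auto intro: order.trans[OF _ M_le])
  also have "(\<Prod>e\<in>{e \<in> {1..k*M}. e mod k \<in> {0, a, b}}. 1 - fps_X^e)
      = q_pochhammer (fps_X^k) M * (\<Prod>i<M. 1 - fps_X^a * (fps_X^k)^i) * (\<Prod>i<M. 1 - fps_X^b * (fps_X^k)^i)"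
    by (rule prod_residue_classes)
  also have "fps_eq_upto M \<dots> (Abs_fps (jacobi_coeff k a))"
    by (rule prod_jacobi_triple_eq_upto)
  finally show ?thesis .
qed

end

end

lemma member_le_sum_mset: "x \<in># P \<Longrightarrow> x \<le> sum_mset (P :: nat multiset)"
  by (induction P) auto

lemma size_le_sum_mset: "0 \<notin># P \<Longrightarrow> size P \<le> sum_mset (P :: nat multiset)"
  by (induction P) auto

definition partition_count :: "nat set \<Rightarrow> nat \<Rightarrow> nat" where
  "partition_count T n = card {P. set_mset P \<subseteq> T \<and> sum_mset P = n}"

lemma finite_partitions:
  fixes T :: "nat set"
  assumes "0 \<notin> T"
  shows "finite {P. set_mset P \<subseteq> T \<and> sum_mset P = n}"
proof (rule finite_subset)
  show "{P. set_mset P \<subseteq> T \<and> sum_mset P = n} \<subseteq> (\<Union>m\<le>n. multisets_of_size {0..n} m)"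
  proof
    fix P assume P: "P \<in> {P. set_mset P \<subseteq> T \<and> sum_mset P = n}"
    then have "size P \<le> n" using assms size_le_sum_mset[of P] by auto
    moreover have "set_mset P \<subseteq> {0..n}" using P member_le_sum_mset by auto
    ultimately show "P \<in> (\<Union>m\<le>n. multisets_of_size {0..n} m)"
      unfolding multisets_of_size_def by blast
  qed
qed auto

lemma partitions_insert_eq:
  assumes "t \<notin> T"
  shows "{P. set_mset P \<subseteq> insert t T \<and> sum_mset P = n}
       = {P. set_mset P \<subseteq> T \<and> sum_mset P = n}
         \<union> add_mset t ` {P. set_mset P \<subseteq> insert t T \<and> t + sum_mset P = n}"
proof (intro equalityI subsetI)
  fix P assume P: "P \<in> {P. set_mset P \<subseteq> insert t T \<and> sum_mset P = n}"
  show "P \<in> {P. set_mset P \<subseteq> T \<and> sum_mset P = n}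
         \<union> add_mset t ` {P. set_mset P \<subseteq> insert t T \<and> t + sum_mset P = n}"
  proof (cases "t \<in># P")
    case True
    then have "P = add_mset t (P - {#t#})" by simp
    moreover have "set_mset (P - {#t#}) \<subseteq> insert t T" using P by (auto dest: in_diffD)
    moreover have "t + sum_mset (P - {#t#}) = n" using P sum_mset.remove[OF True] by simp
    ultimately show ?thesis by blast
  next
    case False
    then show ?thesis using P by auto
  qed
qed auto

lemma partition_count_insert:
  assumes "t \<notin> T" "0 \<notin> insert t T"
  shows "partition_count (insert t T) n
       = partition_count T n + (if t \<le> n then partition_count (insert t T) (n - t) else 0)"
proof -
  have "{P. set_mset P \<subseteq> insert t T \<and> t + sum_mset P = n}
      = (if t \<le> n then {P. set_mset P \<subseteq> insert t T \<and> sum_mset P = n - t} else {})"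
    by auto
  moreover have "{P. set_mset P \<subseteq> T \<and> sum_mset P = n} \<inter> add_mset t ` A = {}" for A
    using assms(1) by auto
  moreover have "inj_on (add_mset t) A" for A
    by (simp add: inj_on_def)
  ultimately show ?thesis
    unfolding partition_count_def partitions_insert_eq[OF assms(1), of n] using assms(2)
    by (simp add: card_Un_disjoint card_image finite_partitions)
qed

lemma partition_fps_mult_prod:
  assumes "finite T" "0 \<notin> T"
  shows "Abs_fps (\<lambda>n. of_nat (partition_count T n)) * (\<Prod>t\<in>T. 1 - fps_X^t) = (1 :: 'a::comm_ring_1 fps)"
  using assms
proof (induction T rule: finite_induct)
  case empty
  have "partition_count {} n = (if n = 0 then 1 else 0)" for n
  proof -
    have "{P. set_mset P \<subseteq> {} \<and> sum_mset P = n} = (if n = 0 then {{#}} else {})"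
      by auto
    then show ?thesis unfolding partition_count_def by simp
  qed
  then show ?case by (simp add: fps_eq_iff)
next
  case (insert t T)
  let ?G = "\<lambda>T. Abs_fps (\<lambda>n. of_nat (partition_count T n)) :: 'a fps"
  have "?G (insert t T) * (1 - fps_X^t) = ?G T"
  proof (rule fps_ext)
    fix n
    show "(?G (insert t T) * (1 - fps_X^t)) $ n = ?G T $ n"
      using partition_count_insert[OF insert.hyps(2) insert.prems, of n]
      by (simp add: algebra_simps fps_X_power_mult_nth)
  qed
  then show ?case
    using insert by (simp add: mult.assoc [symmetric])
qed

lemma length_le_sum_list: "0 \<notin> set c \<Longrightarrow> length c \<le> sum_list (c :: nat list)"
  by (induction c) auto

lemma finite_compositions: "finite {c \<in> compositions T. sum_list c = n}"
proof (rule finite_subset)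
  show "{c \<in> compositions T. sum_list c = n} \<subseteq> {xs. set xs \<subseteq> {0..n} \<and> length xs \<le> n}"
  proof
    fix c assume c: "c \<in> {c \<in> compositions T. sum_list c = n}"
    then have "length c \<le> n" using length_le_sum_list[of c] by (auto simp: compositions_def)
    moreover have "set c \<subseteq> {0..n}" using c member_le_sum_list by fastforce
    ultimately show "c \<in> {xs. set xs \<subseteq> {0..n} \<and> length xs \<le> n}" by simp
  qed
qed (rule finite_lists_length_le; simp)

lemma compositions_sum_eq_0: "{c \<in> compositions T. sum_list c = 0} = {[]}"
proof -
  have "c = []" if "c \<in> compositions T" "sum_list c = 0" for c
    using that by (cases c) (auto simp: compositions_def)
  then show ?thesis by (auto simp: compositions_def)
qed

lemma compositions_sum_eq_pos:
  assumes "0 < n"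
  shows "{c \<in> compositions T. sum_list c = n}
       = (\<Union>p\<in>{p \<in> {1..n}. p \<in> T}. (#) p ` {c \<in> compositions T. sum_list c = n - p})"
proof (intro equalityI subsetI)
  fix c assume c: "c \<in> {c \<in> compositions T. sum_list c = n}"
  with assms obtain p c' where pc: "c = p # c'" by (cases c) auto
  with c have "p \<in> {p \<in> {1..n}. p \<in> T}" "c' \<in> {c \<in> compositions T. sum_list c = n - p}"
    by (auto simp: compositions_def)
  with pc show "c \<in> (\<Union>p\<in>{p \<in> {1..n}. p \<in> T}. (#) p ` {c \<in> compositions T. sum_list c = n - p})"
    by blast
qed (auto simp: compositions_def)

definition composition_weight :: "nat set \<Rightarrow> (nat \<Rightarrow> 'a::comm_semiring_1) \<Rightarrow> nat \<Rightarrow> 'a" where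
  "composition_weight T w n = (\<Sum>c \<in> {c \<in> compositions T. sum_list c = n}. prod_list (map w c))"

lemma composition_weight_0 [simp]: "composition_weight T w 0 = 1"
  unfolding composition_weight_def compositions_sum_eq_0 by simp

lemma composition_weight_pos:
  assumes "0 < n"
  shows "composition_weight T w n = (\<Sum>p \<in> {p \<in> {1..n}. p \<in> T}. w p * composition_weight T w (n - p))"
  unfolding composition_weight_def compositions_sum_eq_pos[OF assms]
  by (subst sum.UNION_disjoint) (auto simp: sum.reindex sum_distrib_left finite_compositions)

lemma composition_fps_mult:
  "Abs_fps (composition_weight T w) * (1 - Abs_fps (\<lambda>n. if 0 < n \<and> n \<in> T then w n else 0))
     = (1 :: 'a::comm_ring_1 fps)"
proof (rule fps_ext)
  fix n
  let ?W = "Abs_fps (\<lambda>n. if 0 < n \<and> n \<in> T then w n else 0) :: 'a fps"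
  have "(?W * Abs_fps (composition_weight T w)) $ n
      = (\<Sum>p \<in> {p \<in> {1..n}. p \<in> T}. w p * composition_weight T w (n - p))"
  proof -
    have eq: "{p \<in> {1..n}. p \<in> T} = {p \<in> {0..n}. 0 < p \<and> p \<in> T}" by auto
    show ?thesis
      unfolding fps_mult_nth eq sum.inter_filter[OF finite_atLeastAtMost] by (rule sum.cong) simp_all
  qed
  then show "(Abs_fps (composition_weight T w) * (1 - ?W)) $ n = 1 $ n"
    by (cases "n = 0") (simp_all add: algebra_simps composition_weight_pos)
qed

lemma jacobi_exponent_3_1: "jacobi_exponent 3 1 t = t * (3 * t - 1) div 2"
  using two_times_jacobi_exponent[of 3 1 t] by (simp add: algebra_simps)

lemma ex_pentagonal_iff:
  "(\<exists>m::int. m \<ge> 0 \<and> Q m \<and> (int n = m * (3*m + 1) div 2 \<or> int n = m * (3*m - 1) div 2))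
     \<longleftrightarrow> (\<exists>t. Q \<bar>t\<bar> \<and> jacobi_exponent 3 1 t = int n)"
proof
  assume "\<exists>m::int. m \<ge> 0 \<and> Q m \<and> (int n = m * (3*m + 1) div 2 \<or> int n = m * (3*m - 1) div 2)"
  then obtain m :: int where "m \<ge> 0" "Q m" and "int n = m * (3*m + 1) div 2 \<or> int n = m * (3*m - 1) div 2"
    by blast
  moreover have "m * (3*m + 1) = (-m) * (3 * (-m) - 1)" by (simp add: algebra_simps)
  ultimately show "\<exists>t. Q \<bar>t\<bar> \<and> jacobi_exponent 3 1 t = int n"
    unfolding jacobi_exponent_3_1 by (metis abs_minus_cancel abs_of_nonneg)
next
  assume "\<exists>t. Q \<bar>t\<bar> \<and> jacobi_exponent 3 1 t = int n"
  then obtain t where t: "Q \<bar>t\<bar>" "int n = t * (3 * t - 1) div 2"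
    unfolding jacobi_exponent_3_1 by auto
  show "\<exists>m::int. m \<ge> 0 \<and> Q m \<and> (int n = m * (3*m + 1) div 2 \<or> int n = m * (3*m - 1) div 2)"
  proof (cases "t \<ge> 0")
    case True
    then show ?thesis using t by (intro exI[of _ t]) simp
  next
    case False
    have "t * (3 * t - 1) = (-t) * (3 * (-t) + 1)" by (simp add: algebra_simps)
    then show ?thesis using t False by (intro exI[of _ "-t"]) simp
  qed
qed

lemma P5_eq: "P5 = {n. \<exists>t. jacobi_exponent 3 1 t = int n}"
  unfolding P5_def using ex_pentagonal_iff[where Q = "\<lambda>_. True"] by simp

lemma P5hat_eq: "P5hat = {n. \<exists>t. even t \<and> jacobi_exponent 3 1 t = int n}"
  unfolding P5hat_def using ex_pentagonal_iff[where Q = even] by simp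

definition pent_sign :: "nat \<Rightarrow> int" where
  "pent_sign p = (if p \<in> P5hat then -1 else 1)"

lemma one_minus_pentagonal_fps:
  "1 - Abs_fps (\<lambda>n. if 0 < n \<and> n \<in> P5 then pent_sign n else 0) = Abs_fps (jacobi_coeff 3 1)"
proof (rule fps_ext)
  fix n
  have coeff: "jacobi_coeff 3 1 n = (if even t then 1 else -1)" if "jacobi_exponent 3 1 t = int n" for t
    using jacobi_coeff_eq[of 1 2 3] that by simp
  have inj: "t = t'" if "jacobi_exponent 3 1 t = jacobi_exponent 3 1 t'" for t t'
    using jacobi_exponent_inj[of 1 2 3] that by simp
  show "(1 - Abs_fps (\<lambda>n. if 0 < n \<and> n \<in> P5 then pent_sign n else 0)) $ n
      = Abs_fps (jacobi_coeff 3 1) $ n"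
  proof (cases "\<exists>t. jacobi_exponent 3 1 t = int n")
    case True
    then obtain t where t: "jacobi_exponent 3 1 t = int n" by blast
    have "n \<in> P5" unfolding P5_eq using t by blast
    moreover have "n \<in> P5hat \<longleftrightarrow> even t"
    proof
      assume "n \<in> P5hat"
      then obtain t' where "even t'" "jacobi_exponent 3 1 t' = jacobi_exponent 3 1 t"
        unfolding P5hat_eq using t by auto
      then show "even t" using inj by metis
    qed (use t in \<open>auto simp: P5hat_eq\<close>)
    moreover have "n = 0 \<Longrightarrow> t = 0" using t inj[of t 0] by (simp add: jacobi_exponent_def)
    ultimately show ?thesis using coeff[OF t] by (auto simp: pent_sign_def)
  next
    case False
    moreover have "n \<noteq> 0" using False by (metis jacobi_exponent_3_1 mult_zero_left div_0 of_nat_0)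
    ultimately show ?thesis by (simp add: P5_eq jacobi_coeff_def)
  qed
qed

lemma two_times_jacobi_exponent_5_3: "2 * jacobi_exponent 5 3 t = t * (5 * t + 1)"
  using two_times_jacobi_exponent[of 5 3 t] by (simp add: algebra_simps)

lemma even_jacobi_exponent_5_3_iff:
  "(\<exists>t. even t \<and> jacobi_exponent 5 3 t = int n)
     \<longleftrightarrow> (\<exists>j::int. j \<ge> 0 \<and> (int n = 10*j^2 + j \<or> int n = 10*j^2 - j))"
proof -
  have D: "jacobi_exponent 5 3 (2*u) = 10*u^2 + u" for u
    using two_times_jacobi_exponent_5_3[of "2*u"] by (simp add: power2_eq_square algebra_simps)
  show ?thesis
  proof
    assume "\<exists>t. even t \<and> jacobi_exponent 5 3 t = int n"
    then obtain u where "jacobi_exponent 5 3 (2*u) = int n" by (auto elim!: evenE)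
    then have n: "int n = 10*u^2 + u" "int n = 10*(-u)^2 - (-u)" by (simp_all add: D)
    show "\<exists>j::int. j \<ge> 0 \<and> (int n = 10*j^2 + j \<or> int n = 10*j^2 - j)"
    proof (cases "u \<ge> 0")
      case True
      then show ?thesis using n(1) by blast
    next
      case False
      then show ?thesis using n(2) by (intro exI[of _ "-u"]) simp
    qed
  next
    assume "\<exists>j::int. j \<ge> 0 \<and> (int n = 10*j^2 + j \<or> int n = 10*j^2 - j)"
    then obtain j :: int where "int n = 10*j^2 + j \<or> int n = 10*(-j)^2 + (-j)" by auto
    then show "\<exists>t. even t \<and> jacobi_exponent 5 3 t = int n"
      by (metis D dvd_triv_left)
  qed
qed

lemma odd_jacobi_exponent_5_3_iff:
  "(\<exists>t. odd t \<and> jacobi_exponent 5 3 t = int n)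
     \<longleftrightarrow> (\<exists>j::int. j \<ge> 0 \<and> (int n = 10*j^2 + 9*j + 2 \<or> int n = 10*j^2 - 9*j + 2))"
proof -
  have D: "jacobi_exponent 5 3 (2*j - 1) = 10*j^2 - 9*j + 2"
    "jacobi_exponent 5 3 (-(2*j + 1)) = 10*j^2 + 9*j + 2" for j
    using two_times_jacobi_exponent_5_3[of "2*j - 1"] two_times_jacobi_exponent_5_3[of "-(2*j + 1)"]
    by (simp_all add: power2_eq_square algebra_simps)
  show ?thesis
  proof
    assume "\<exists>t. odd t \<and> jacobi_exponent 5 3 t = int n"
    then obtain u where u: "jacobi_exponent 5 3 (2*u + 1) = int n" by (auto elim!: oddE)
    show "\<exists>j::int. j \<ge> 0 \<and> (int n = 10*j^2 + 9*j + 2 \<or> int n = 10*j^2 - 9*j + 2)"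
    proof (cases "u \<ge> 0")
      case True
      then show ?thesis using u D(1)[of "u + 1"] by (intro exI[of _ "u + 1"]) (simp add: algebra_simps)
    next
      case False
      then show ?thesis using u D(2)[of "-u - 1"] by (intro exI[of _ "-u - 1"]) (simp add: algebra_simps)
    qed
  next
    assume "\<exists>j::int. j \<ge> 0 \<and> (int n = 10*j^2 + 9*j + 2 \<or> int n = 10*j^2 - 9*j + 2)"
    then obtain j :: int where "int n = 10*j^2 + 9*j + 2 \<or> int n = 10*j^2 - 9*j + 2" by auto
    moreover have "odd (2*j - 1)" "odd (-(2*j + 1))" by simp_all
    ultimately show "\<exists>t. odd t \<and> jacobi_exponent 5 3 t = int n"
      using D by metis
  qed
qed

lemma acoef_eq_jacobi_coeff: "acoef n = jacobi_coeff 5 3 n"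
  unfolding acoef_def jacobi_coeff_def even_jacobi_exponent_5_3_iff odd_jacobi_exponent_5_3_iff ..

lemma ellhat_sign: "(-1::int) ^ ellhat c = prod_list (map pent_sign c)"
  by (induction c) (simp_all add: ellhat_def pent_sign_def)

lemma rr_eq_partition_count:
  assumes "n \<le> M"
  shows "rr n = partition_count {e \<in> {1..M}. e mod 5 \<in> {1, 4}} n"
proof -
  have "{P. (\<forall>x\<in>#P. 0 < x \<and> (x mod 5 = 1 \<or> x mod 5 = 4)) \<and> sum_mset P = n}
      = {P. set_mset P \<subseteq> {e \<in> {1..M}. e mod 5 \<in> {1, 4}} \<and> sum_mset P = n}"
    using assms member_le_sum_mset by (fastforce simp: Suc_le_eq)
  then show ?thesis unfolding rr_def partition_count_def by simp
qed

lemma composition_fps_mult_euler_eq_upto: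
  "fps_eq_upto M (Abs_fps (composition_weight P5 pent_sign) * (\<Prod>e\<in>{1..M}. 1 - fps_X^e)) 1"
proof -
  let ?C = "Abs_fps (composition_weight P5 pent_sign)"
  have "{e \<in> {1..M}. e mod 3 \<in> {0, 1, 2}} = {1..M}" by auto
  then have "fps_eq_upto M (\<Prod>e\<in>{1..M}. 1 - fps_X^e) (Abs_fps (jacobi_coeff 3 1))"
    using jacobi_triple_product_eq_upto[of 1 2 3 M] by simp
  then have "fps_eq_upto M (?C * (\<Prod>e\<in>{1..M}. 1 - fps_X^e)) (?C * Abs_fps (jacobi_coeff 3 1))"
    by (rule fps_eq_upto_mult[OF fps_eq_upto_refl])
  also have "?C * Abs_fps (jacobi_coeff 3 1) = 1"
    using composition_fps_mult[of P5 pent_sign] unfolding one_minus_pentagonal_fps .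
  finally show ?thesis .
qed

lemma rr_fps_mult_prod_eq_upto:
  "fps_eq_upto M (Abs_fps (\<lambda>n. int (rr n)) * (\<Prod>e\<in>{e \<in> {1..M}. e mod 5 \<in> {1, 4}}. 1 - fps_X^e)) 1"
proof -
  define F where "F = {e \<in> {1..M}. e mod 5 \<in> {1, 4}}"
  have "fps_eq_upto M (Abs_fps (\<lambda>n. int (rr n))) (Abs_fps (\<lambda>n. of_nat (partition_count F n)))"
    unfolding fps_eq_upto_def F_def by (simp add: rr_eq_partition_count)
  then have "fps_eq_upto M (Abs_fps (\<lambda>n. int (rr n)) * (\<Prod>e\<in>F. 1 - fps_X^e))
      (Abs_fps (\<lambda>n. of_nat (partition_count F n)) * (\<Prod>e\<in>F. 1 - fps_X^e))"
    by (rule fps_eq_upto_mult[OF _ fps_eq_upto_refl])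
  also have "Abs_fps (\<lambda>n. of_nat (partition_count F n)) * (\<Prod>e\<in>F. 1 - fps_X^e) = (1 :: int fps)"
    by (rule partition_fps_mult_prod) (simp_all add: F_def)
  finally show ?thesis unfolding F_def .
qed

lemma rr_fps_eq_upto:
  "fps_eq_upto M (Abs_fps (\<lambda>n. int (rr n))) (Abs_fps acoef * Abs_fps (composition_weight P5 pent_sign))"
proof -
  define F where "F = {e \<in> {1..M}. e mod 5 \<in> {1, 4}}"
  define G where "G = {e \<in> {1..M}. e mod 5 \<in> {0, 3, 2}}"
  define R where "R = Abs_fps (\<lambda>n. int (rr n))"
  define C where "C = Abs_fps (composition_weight P5 pent_sign)"
  have "{1..M} = F \<union> G" "F \<inter> G = {}" "finite F" "finite G" unfolding F_def G_def by auto
  then have split: "(\<Prod>e\<in>{1..M}. 1 - fps_X^e)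
      = (\<Prod>e\<in>F. 1 - fps_X^e) * (\<Prod>e\<in>G. 1 - fps_X^e :: int fps)"
    by (simp add: prod.union_disjoint)
  have G_prod: "fps_eq_upto M (\<Prod>e\<in>G. 1 - fps_X^e) (Abs_fps acoef)"
    using jacobi_triple_product_eq_upto[of 3 2 5 M] by (simp add: G_def acoef_eq_jacobi_coeff[abs_def])
  have "fps_eq_upto M R (R * (C * (\<Prod>e\<in>{1..M}. 1 - fps_X^e)))"
    using fps_eq_upto_mult[OF fps_eq_upto_refl composition_fps_mult_euler_eq_upto, of M R]
    by (simp add: C_def fps_eq_upto_sym)
  also have "R * (C * (\<Prod>e\<in>{1..M}. 1 - fps_X^e))
      = (R * (\<Prod>e\<in>F. 1 - fps_X^e)) * ((\<Prod>e\<in>G. 1 - fps_X^e) * C)"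
    unfolding split by (simp add: mult_ac)
  also have "fps_eq_upto M \<dots> (1 * (Abs_fps acoef * C))"
    using rr_fps_mult_prod_eq_upto[of M] G_prod unfolding R_def F_def
    by (intro fps_eq_upto_mult fps_eq_upto_refl)
  finally show ?thesis by (simp add: R_def C_def)
qed

theorem mainTheorem16:
  fixes n :: nat
  shows "int (rr n) = (\<Sum>i = 0..n. acoef i *
           (\<Sum>c \<in> {c \<in> compositions P5. sum_list c = n - i}. (-1::int) ^ ellhat c))"
proof -
  have "int (rr n) = (Abs_fps acoef * Abs_fps (composition_weight P5 pent_sign)) $ n"
    using rr_fps_eq_upto[of n] by (simp add: fps_eq_upto_def)
  then show ?thesis
    by (simp add: fps_mult_nth composition_weight_def ellhat_sign)
qed

end
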